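(* Let $a,b>1$ be such that $\log_b(a)\in\mathbb{Q}$, and write $\log_b(a)=q/p$ with $p,q$ relatively prime positive integers. Then, as operators from $L^2(\mathbb{R}_+)$ to $L^2(\mathbb{R})$, for all $s,m\in\mathbb{Z}$, \[ D_\varphi D_{a^{sq}} = T_{-sp} D_\varphi \qquad\text{and}\qquad D_\varphi M_{\gamma_m} = e^{2\pi i m/(b-1)}\, M_{m} D_\varphi . \]
   Context: For $b>1$ and $m\in\mathbb{Z}$, $\gamma_m:\mathbb{R}_+\to\mathbb{C}$ is the function satisfying $\gamma_m(bx)=\gamma_m(x)$ for all $x>0$ and $\gamma_m(x)=e^{2\pi i m x/(b-1)}$ for $x\in[1,b)$. For a bounded function $\eta$, $M_\eta$ denotes multiplication by $\eta$ (on $L^2(\mathbb{R}_+)$ or $L^2(\mathbb{R})$); for a real number $c$, $M_c$ on $L^2(\mathbb{R})$ is multiplication by $x\mapsto e^{2\pi i c x}$. For $a>0$, $D_a f(x)=a^{1/2}f(ax)$ (on $L^2(\mathbb{R}_+)$ or $L^2(\mathbb{R})$), and for $c\in\mathbb{R}$, $T_c f(x)=f(x-c)$ on $L^2(\mathbb{R})$. The function $\varphi:\mathbb{R}\to\mathbb{R}_+$ is defined by $\varphi(x)=b^k\big((b-1)x+(1-(b-1)k)\big)$ for $x\in[k,k+1)$, $k\in\mathbb{Z}$ (the piecewise linear interpolant of the points $(k,b^k)$), and $D_\varphi:L^2(\mathbb{R}_+)\to L^2(\mathbb{R})$ is the (unitary) operator $(D_\varphi h)(x)=\sqrt{\varphi'(x)}\,h(\varphi(x))$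 for a.e. $x\in\mathbb{R}$. *)

theory Defs
  imports "HOL-Analysis.Analysis"
begin

text \<open>The piecewise linear interpolant of the points (k, b^k).\<close>
definition phi :: "real \<Rightarrow> real \<Rightarrow> real" where
  "phi b x = (let k = \<lfloor>x\<rfloor> in b powr of_int k * ((b - 1) * x + (1 - (b - 1) * of_int k)))"

text \<open>gamma_m: multiplicatively b-periodic on R_+, equal to exp(2 pi i m x/(b-1)) on [1,b).
  For x > 0, with k = floor(log_b x), x / b^k lies in [1,b). Values for x <= 0 are irrelevant.\<close>
definition gamma :: "real \<Rightarrow> int \<Rightarrow> real \<Rightarrow> complex" where
  "gamma b m x = (if x > 0 then
      exp (2 * pi * \<i> * of_int m * of_real (x / b powr of_int \<lfloor>log b x\<rfloor>) / of_real (b - 1))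
    else 0)"

definition dil :: "real \<Rightarrow> (real \<Rightarrow> complex) \<Rightarrow> real \<Rightarrow> complex" where
  "dil a f x = of_real (sqrt a) * f (a * x)"

definition transl :: "real \<Rightarrow> (real \<Rightarrow> complex) \<Rightarrow> real \<Rightarrow> complex" where
  "transl c f x = f (x - c)"

definition mult_op :: "(real \<Rightarrow> complex) \<Rightarrow> (real \<Rightarrow> complex) \<Rightarrow> real \<Rightarrow> complex" where
  "mult_op eta f x = eta x * f x"

definition modul :: "real \<Rightarrow> (real \<Rightarrow> complex) \<Rightarrow> real \<Rightarrow> complex" where
  "modul c f x = exp (2 * pi * \<i> * of_real (c * x)) * f x"

text \<open>D_phi h(x) = sqrt(phi'(x)) h(phi(x)); phi' exists off the integers (a null set).\<close>
definition Dphi :: "real \<Rightarrow> (real \<Rightarrow> complex) \<Rightarrow> real \<Rightarrow> complex" where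
  "Dphi b h x = of_real (sqrt (deriv (phi b) x)) * h (phi b x)"

end

theory Submission
  imports Defs
begin

text \<open>The interpolant satisfies phi(x + n) = b^n phi(x) for integers n and is affine with
  slope b^k (b - 1) on (k, k + 1). Since a^(sq) = b^(sp), composing the dilation by a^(sq) with phi
  gives the translation by sp, and the factor b^(sp) that phi' picks up under this translation is
  exactly the normalisation sqrt(b^(sp)) of the dilation; this only fails on the null set of
  integers, where phi has corners. Moreover phi maps [k, k + 1) onto [b^k, b^(k+1)) with
  phi(x) / b^k = 1 + (b - 1)(x - k), so gamma_m(phi(x)) = e^(2 pi i m/(b - 1)) e^(2 pi i m x) for
  every x.\<close>

lemma phi_eq_frac:
  "phi b x = b powr of_int \<lfloor>x\<rfloor> * ((b - 1) * frac x + 1)"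
  unfolding phi_def Let_def frac_def by (simp add: algebra_simps)

lemma phi_add_of_int:
  fixes n :: int
  shows "phi b (x + of_int n) = b powr of_int n * phi b x"
  by (simp add: phi_eq_frac powr_add)

lemma phi_has_field_derivative:
  assumes "x \<notin> \<int>"
  shows "(phi b has_field_derivative b powr of_int \<lfloor>x\<rfloor> * (b - 1)) (at x)"
proof -
  define k where "k = \<lfloor>x\<rfloor>"
  define g where "g y = b powr of_int k * ((b - 1) * y + (1 - (b - 1) * of_int k))" for y
  have "(g has_field_derivative b powr of_int k * (b - 1)) (at x)"
    unfolding g_def by (auto intro!: derivative_eq_intros)
  then show ?thesis
    unfolding k_def[symmetric]
  proof (rule has_field_derivative_transform_within_open)
    have "of_int k \<noteq> x"
      using assms by auto
    then have "of_int k < x"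
      unfolding k_def by (simp add: order_less_le)
    moreover have "x < of_int k + 1"
      unfolding k_def by linarith
    ultimately show "x \<in> {of_int k<..<of_int k + 1}"
      by simp
    show "g y = phi b y" if "y \<in> {of_int k<..<of_int k + 1}" for y
    proof -
      from that have "\<lfloor>y\<rfloor> = k" by (simp add: floor_eq_iff)
      then show ?thesis unfolding g_def phi_def Let_def by simp
    qed
  qed simp
qed

lemma deriv_phi_add_of_int:
  fixes n :: int
  assumes "x \<notin> \<int>"
  shows "deriv (phi b) (x + of_int n) = b powr of_int n * deriv (phi b) x"
proof -
  have "x + of_int n \<notin> \<int>"
    using assms by (metis Ints_diff Ints_of_int add_diff_cancel_right')
  then have "deriv (phi b) (x + of_int n) = b powr of_int \<lfloor>x + of_int n\<rfloor> * (b - 1)"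
    by (intro DERIV_imp_deriv phi_has_field_derivative)
  moreover have "deriv (phi b) x = b powr of_int \<lfloor>x\<rfloor> * (b - 1)"
    using assms by (intro DERIV_imp_deriv phi_has_field_derivative)
  ultimately show ?thesis
    by (simp add: powr_add)
qed

lemma floor_log_phi:
  assumes "b > 1"
  shows "\<lfloor>log b (phi b x)\<rfloor> = \<lfloor>x\<rfloor>"
proof -
  define f where "f = (b - 1) * frac x + 1"
  have "(b - 1) * frac x < b - 1"
    using assms frac_lt_1 by simp
  then have "f < b"
    unfolding f_def by linarith
  have "1 \<le> f"
    using assms frac_ge_0[of x] unfolding f_def by simp
  have "log b (phi b x) = of_int \<lfloor>x\<rfloor> + log b f"
    using assms \<open>1 \<le> f\<close> by (simp add: phi_eq_frac f_def[symmetric] log_mult log_powr_cancel)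
  moreover have "0 \<le> log b f" "log b f < 1"
    using assms \<open>1 \<le> f\<close> \<open>f < b\<close> by simp_all
  ultimately show ?thesis
    by (simp add: floor_eq_iff)
qed

lemma gamma_phi:
  assumes "b > 1"
  shows "gamma b m (phi b x)
    = exp (2 * pi * \<i> * of_int m / of_real (b - 1)) * exp (2 * pi * \<i> * of_real (of_int m * x))"
proof -
  have "phi b x > 0"
    using assms frac_ge_0[of x] unfolding phi_eq_frac
    by (intro mult_pos_pos) (auto simp: add_nonneg_pos)
  moreover have "phi b x / b powr of_int \<lfloor>log b (phi b x)\<rfloor> = (b - 1) * frac x + 1"
    using assms by (simp only: floor_log_phi) (simp add: phi_eq_frac)
  ultimately have "gamma b m (phi b x)
      = exp (2 * pi * \<i> * of_int m * of_real ((b - 1) * frac x + 1) / of_real (b - 1))"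
    unfolding gamma_def by simp
  also have "2 * pi * \<i> * of_int m * of_real ((b - 1) * frac x + 1) / of_real (b - 1)
      = 2 * pi * \<i> * of_int m / of_real (b - 1) + 2 * pi * \<i> * of_real (of_int m * x)
        - (2 * of_int (m * \<lfloor>x\<rfloor>) * pi) * \<i>"
    using assms unfolding frac_def by (simp add: field_simps)
  also have "exp \<dots>
      = exp (2 * pi * \<i> * of_int m / of_real (b - 1)) * exp (2 * pi * \<i> * of_real (of_int m * x))"
    by (simp only: exp_diff exp_add exp_integer_2pi[OF Ints_of_int]) simp
  finally show ?thesis .
qed

lemma Dphi_dil_powr_of_int:
  fixes n :: int
  assumes "x \<notin> \<int>"
  shows "Dphi b (dil (b powr of_int n) h) x = Dphi b h (x + of_int n)"
  using assms
  by (simp add: Dphi_def dil_def phi_add_of_int deriv_phi_add_of_int real_sqrt_mult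
      mult.commute mult.left_commute)

lemma Dphi_mult_op_gamma:
  assumes "b > 1"
  shows "Dphi b (mult_op (gamma b m) h) x
    = exp (2 * pi * \<i> * of_int m / of_real (b - 1)) * modul (of_int m) (Dphi b h) x"
  using assms
  by (simp add: Dphi_def mult_op_def modul_def gamma_phi mult.commute mult.left_commute)

lemma powr_mult_eq_if_log_eq_divide:
  fixes p q :: nat
  assumes "a > 0" and "b > 1" and "q > 0" and "log b a = real p / real q"
  shows "a powr (of_int s * real q) = b powr of_int (s * int p)"
proof -
  have "a = b powr (real p / real q)"
    using assms by (metis powr_log_cancel order.strict_trans zero_less_one less_irrefl)
  then have "a powr (of_int s * real q) = b powr (real p / real q * (of_int s * real q))"
    by (simp add: powr_powr)
  also have "real p / real q * (of_int s * real q) = of_int (s * int p)"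
    using assms(3) by simp
  finally show ?thesis .
qed

lemma AE_not_in_Ints: "AE x in lborel. (x :: real) \<notin> \<int>"
  by (rule AE_not_in, rule countable_imp_null_set_lborel) (simp add: Ints_def)

theorem lemma2p1:
  fixes a b :: real and p q :: nat
  assumes "a > 1" and "b > 1"
    and "p > 0" and "q > 0" and "coprime p q"
    and "log b a = real p / real q"
  shows "\<forall>(s::int) (m::int) (h::real \<Rightarrow> complex).
           h \<in> borel_measurable lborel \<and> set_integrable lborel {0<..} (\<lambda>x. (norm (h x))\<^sup>2) \<longrightarrow>
           (AE x in lborel. Dphi b (dil (a powr (of_int s * real q)) h) x
                              = transl (- (of_int s * real p)) (Dphi b h) x) \<and>
           (AE x in lborel. Dphi b (mult_op (gamma b m) h) x
                              = exp (2 * pi * \<i> * of_int m / of_real (b - 1)) * modul (of_int m) (Dphi b h) x)"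
proof (intro allI impI conjI)
  fix s m :: int and h :: "real \<Rightarrow> complex"
  have "Dphi b (dil (a powr (of_int s * real q)) h) x = transl (- (of_int s * real p)) (Dphi b h) x"
    if "x \<notin> \<int>" for x
    using Dphi_dil_powr_of_int[OF that, where n = "s * int p" and h = h]
      powr_mult_eq_if_log_eq_divide[of a b q p s] assms
    by (simp add: transl_def)
  with AE_not_in_Ints
  show "AE x in lborel. Dphi b (dil (a powr (of_int s * real q)) h) x
                          = transl (- (of_int s * real p)) (Dphi b h) x"
    by (rule eventually_mono)
  show "AE x in lborel. Dphi b (mult_op (gamma b m) h) x
          = exp (2 * pi * \<i> * of_int m / of_real (b - 1)) * modul (of_int m) (Dphi b h) x"
    using assms(2) by (simp add: Dphi_mult_op_gamma)
qed

end
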